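(* For every integer $n\ge 1$, $$ \nu_3(T(n))=\begin{cases} 0, & n\equiv 1,2,3,4,5,6,8,10,11\pmod{13};\\ 1, & n\equiv 7\pmod{13};\\ \nu_3(n)+2, & n\equiv 0\pmod{13};\\ \nu_3(n+1)+2, & n\equiv 12\pmod{13};\\ 4, & n\equiv 9\pmod{39};\\ \nu_3(n+17)+4, & n\equiv 22\pmod{39};\\ \nu_3(n+4)+4, & n\equiv 35\pmod{39}. \end{cases} $$
   Context: $T:\mathbb Z\to\mathbb Z$ is the Tribonacci sequence defined by $T(0)=0$, $T(1)=T(2)=1$ and $T(n+3)=T(n+2)+T(n+1)+T(n)$ for all $n\in\mathbb Z$. For a prime $p$, $\nu_p$ denotes the $p$-adic valuation (exponent of $p$), with $\nu_p(0)=+\infty$. *)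

theory Defs
  imports "HOL-Computational_Algebra.Computational_Algebra"
begin

fun trib :: "nat \<Rightarrow> int" where
  "trib 0 = 0"
| "trib (Suc 0) = 1"
| "trib (Suc (Suc 0)) = 1"
| "trib (Suc (Suc (Suc n))) = trib (Suc (Suc n)) + trib (Suc n) + trib n"

end

theory Submission
  imports Defs
begin

text \<open>
  Extend T to all integers. For every shift c, the linear form L_c(sum a_i x^i) = sum a_i T(c + i)
  on Z[x] sends x^n to T(c + n) and vanishes on multiples of the characteristic polynomial
  F = x^3 - x^2 - x - 1, so congruences for powers of x modulo F and powers of 3 become congruences
  for T. Modulo F one finds x^13 = 4 + 3^2 d and x^39 = 64 + 3^3 d' for explicit quadratic d, d'.
  The lifting-the-exponent estimate (a + 3^s e)^k = a^k + k a^(k-1) 3^s e mod 3^(v_3(k) + 2s)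
  then determines T(c + 13k) modulo 3^(v_3(k) + 4) and T(c + 39k) modulo 3^(v_3(k) + 6) from
  T(c), T(c + 1), T(c + 2). For c in 1..11 the term 4^k T(c) decides the valuation (and
  64^k T(9) with T(9) = 3^4 for n = 9 mod 39); at the zeros c = 0, -1, -4, -17 of T it is the
  first-order term k 4^(k-1) 3^2 L_c(d), resp. k 64^(k-1) 3^3 L_c(d'), of valuation v_3(k) plus
  a constant.
\<close>

fun trib_neg :: "nat \<Rightarrow> int" where
  "trib_neg 0 = 0"
| "trib_neg (Suc 0) = 0"
| "trib_neg (Suc (Suc 0)) = 1"
| "trib_neg (Suc (Suc (Suc m))) = trib_neg m - trib_neg (Suc m) - trib_neg (Suc (Suc m))"

definition trib_int :: "int \<Rightarrow> int" where
  "trib_int i = (if 0 \<le> i then trib (nat i) else trib_neg (nat (- i)))"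

lemma trib_int_of_nat: "trib_int (int n) = trib n"
  by (simp add: trib_int_def)

lemma trib_int_rec: "trib_int (i + 3) = trib_int (i + 2) + trib_int (i + 1) + trib_int i"
proof -
  consider n where "i = int n" | "i \<in> {-3, -2, -1}" | m where "i = - int m - 4"
  proof (cases "0 \<le> i")
    case True
    then show ?thesis
      using that(1)[of "nat i"] by simp
  next
    case False
    show ?thesis
    proof (cases "i < -3")
      case True
      then show ?thesis
        by (intro that(3)[of "nat (- i - 4)"]) simp
    next
      case False
      with \<open>\<not> 0 \<le> i\<close> have "i \<in> {-3, -2, -1}"
        by auto
      then show ?thesis
        by (rule that(2))
    qed
  qed
  then show ?thesis
    by cases (auto simp: trib_int_def nat_add_distrib numeral_eq_Suc)
qed

text \<open>The defining recursion of trib takes exponentially many steps; sliding a window of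
  three consecutive values evaluates the sequence in linearly many.\<close>

lemma trib_int_window_up:
  "(trib_int (int n), trib_int (int n + 1), trib_int (int n + 2))
     = ((\<lambda>(a, b, c). (b, c, a + b + c)) ^^ n) (0, 1, 1)"
proof (induction n)
  case 0
  then show ?case
    by (simp add: trib_int_def numeral_eq_Suc)
next
  case (Suc n)
  have "((\<lambda>(a, b, c). (b, c, a + b + c)) ^^ Suc n) (0, 1, 1)
      = (\<lambda>(a, b, c). (b, c, a + b + c))
          (trib_int (int n), trib_int (int n + 1), trib_int (int n + 2))"
    by (simp only: funpow.simps(2) o_apply Suc.IH)
  then show ?case
    using trib_int_rec[of "int n"] by (simp add: add_ac)
qed

lemma trib_int_window_down:
  "(trib_int (- int n), trib_int (1 - int n), trib_int (2 - int n))
     = ((\<lambda>(a, b, c). (c - a - b, a, b)) ^^ n) (0, 1, 1)"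
proof (induction n)
  case 0
  then show ?case
    by (simp add: trib_int_def numeral_eq_Suc)
next
  case (Suc n)
  have rec: "trib_int (- int n - 1) = trib_int (2 - int n) - trib_int (- int n) - trib_int (1 - int n)"
    using trib_int_rec[of "- int n - 1"] by (simp add: algebra_simps)
  have "- int (Suc n) = - int n - 1" "1 - int (Suc n) = - int n" "2 - int (Suc n) = 1 - int n"
    by simp_all
  then have "(trib_int (- int (Suc n)), trib_int (1 - int (Suc n)), trib_int (2 - int (Suc n)))
      = (trib_int (- int n - 1), trib_int (- int n), trib_int (1 - int n))"
    by (simp only:)
  also have "\<dots> = (\<lambda>(a, b, c). (c - a - b, a, b))
                      (trib_int (- int n), trib_int (1 - int n), trib_int (2 - int n))"
    by (simp only: rec prod.case)
  also have "\<dots> = ((\<lambda>(a, b, c). (c - a - b, a, b)) ^^ Suc n) (0, 1, 1)"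
    by (simp only: funpow.simps(2) o_apply Suc.IH)
  finally show ?case .
qed

lemma trib_int_values:
  "trib_int (-17) = 0" "trib_int (-16) = 56" "trib_int (-15) = -47"
  "trib_int (-4) = 0" "trib_int (-3) = -1" "trib_int (-2) = 1" "trib_int (-1) = 0"
  "trib_int 0 = 0" "trib_int 1 = 1" "trib_int 2 = 1" "trib_int 3 = 2" "trib_int 4 = 4"
  "trib_int 5 = 7" "trib_int 6 = 13" "trib_int 7 = 24" "trib_int 8 = 44" "trib_int 9 = 81"
  "trib_int 10 = 149" "trib_int 11 = 274" "trib_int 12 = 504"
  "trib_int 36 = 1132436852" "trib_int 37 = 2082876103" "trib_int 38 = 3831006429"
  using trib_int_window_down[of 17] trib_int_window_down[of 4] trib_int_window_down[of 1]
    trib_int_window_up[of 0] trib_int_window_up[of 3] trib_int_window_up[of 6]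
    trib_int_window_up[of 9] trib_int_window_up[of 10] trib_int_window_up[of 36]
  by (simp_all add: numeral_eq_Suc)

definition trib_charpoly :: "int poly" where
  "trib_charpoly = [:-1, -1, -1, 1:]"

definition trib_eval :: "int \<Rightarrow> int poly \<Rightarrow> int" where
  "trib_eval c p = (\<Sum>i\<le>degree p. coeff p i * trib_int (c + int i))"

lemma trib_eval_eq_sum:
  assumes "degree p < N"
  shows "trib_eval c p = (\<Sum>i<N. coeff p i * trib_int (c + int i))"
proof -
  have "(\<Sum>i<N. coeff p i * trib_int (c + int i))
      = (\<Sum>i\<le>degree p. coeff p i * trib_int (c + int i))"
    by (rule sum.mono_neutral_right) (use assms in \<open>auto simp: coeff_eq_0\<close>)
  then show ?thesis
    by (simp add: trib_eval_def)
qed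

lemma trib_eval_0 [simp]: "trib_eval c 0 = 0"
  by (simp add: trib_eval_def)

lemma trib_eval_pCons: "trib_eval c (pCons a p) = a * trib_int c + trib_eval (c + 1) p"
proof -
  have "degree (pCons a p) < Suc (Suc (degree p))"
    using degree_pCons_le[of a p] by linarith
  then have "trib_eval c (pCons a p)
      = (\<Sum>i<Suc (Suc (degree p)). coeff (pCons a p) i * trib_int (c + int i))"
    by (rule trib_eval_eq_sum)
  also have "\<dots> = a * trib_int c + (\<Sum>i<Suc (degree p). coeff p i * trib_int (c + 1 + int i))"
    by (subst sum.lessThan_Suc_shift) (simp add: add_ac)
  also have "\<dots> = a * trib_int c + trib_eval (c + 1) p"
    by (simp only: trib_eval_eq_sum[OF lessI])
  finally show ?thesis .
qed

lemma trib_eval_add: "trib_eval c (p + q) = trib_eval c p + trib_eval c q"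
  by (induction p q arbitrary: c rule: poly_induct2) (simp_all add: trib_eval_pCons algebra_simps)

lemma trib_eval_smult: "trib_eval c (smult a p) = a * trib_eval c p"
  by (induction p arbitrary: c) (simp_all add: trib_eval_pCons algebra_simps)

lemma trib_eval_diff: "trib_eval c (p - q) = trib_eval c p - trib_eval c q"
  using trib_eval_add[of c "p - q" q] by simp

lemma trib_eval_charpoly_dvd:
  assumes "trib_charpoly dvd p"
  shows "trib_eval c p = 0"
proof -
  obtain q where "p = trib_charpoly * q"
    using assms by blast
  moreover have "trib_eval c (trib_charpoly * q) = 0"
  proof (induction q arbitrary: c)
    case (pCons a q)
    have "trib_eval c trib_charpoly = 0"
      using trib_int_rec[of c] by (simp add: trib_charpoly_def trib_eval_pCons algebra_simps)
    with pCons.IH show ?case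
      by (simp add: trib_eval_add trib_eval_smult trib_eval_pCons)
  qed simp
  ultimately show ?thesis
    by simp
qed

lemma trib_eval_const_dvd:
  assumes "[:d:] dvd p"
  shows "d dvd trib_eval c p"
proof -
  obtain q where "p = [:d:] * q"
    using assms by blast
  then show ?thesis
    by (simp add: trib_eval_smult)
qed

lemma trib_eval_X_power: "trib_eval c ([:0, 1:] ^ n) = trib_int (c + int n)"
  by (induction n arbitrary: c) (simp_all add: trib_eval_pCons one_pCons add_ac)

lemma charpoly_dvd_X_power_sub:
  "trib_charpoly dvd [:0, 1:] ^ (n + 3)
     - [:trib_int (int n + 1), trib_int (int n + 1) + trib_int (int n), trib_int (int n + 2):]"
proof (induction n)
  case 0
  show ?case
    by (simp add: trib_charpoly_def trib_int_def numeral_eq_Suc one_pCons)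
next
  case (Suc n)
  define a where "a = trib_int (int n + 1)"
  define b where "b = trib_int (int n + 1) + trib_int (int n)"
  define c where "c = trib_int (int n + 2)"
  have "[:trib_int (int (Suc n) + 1), trib_int (int (Suc n) + 1) + trib_int (int (Suc n)),
        trib_int (int (Suc n) + 2):] = [:c, a + c, b + c:]"
    using trib_int_rec[of "int n"] by (simp add: a_def b_def c_def add_ac)
  moreover have "[:0, 1:] * [:a, b, c:] - [:c, a + c, b + c:] = smult c trib_charpoly"
    by (simp add: trib_charpoly_def)
  moreover have "x * y - s = x * (y - r) + (x * r - s)" for x y r s :: "int poly"
    by (simp add: algebra_simps)
  ultimately have "[:0, 1:] ^ (Suc n + 3) - [:trib_int (int (Suc n) + 1),
        trib_int (int (Suc n) + 1) + trib_int (int (Suc n)), trib_int (int (Suc n) + 2):]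
      = [:0, 1:] * ([:0, 1:] ^ (n + 3) - [:a, b, c:]) + smult c trib_charpoly"
    by (metis add_Suc power_Suc)
  then show ?case
    using Suc.IH unfolding a_def b_def c_def by (simp only:) (intro dvd_add dvd_mult dvd_smult dvd_refl)
qed

lemma dvd_diff_chain:
  fixes d x y z :: "'a::comm_ring_1"
  assumes "d dvd x - y" "d dvd y - z"
  shows "d dvd x - z"
  using dvd_add[OF assms] by simp

lemma binomial_dvd_first_order:
  fixes a c e :: "'a::comm_ring_1"
  shows "c^2 dvd (a + c * e) ^ k - (a ^ k + of_nat k * a ^ (k - 1) * c * e)"
proof (induction k)
  case (Suc k)
  then obtain r where r: "(a + c * e) ^ k = a ^ k + of_nat k * a ^ (k - 1) * c * e + c^2 * r"
    by (metis add_diff_cancel_left' diff_add_cancel dvd_def)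
  show ?case
  proof (cases k)
    case (Suc j)
    have "(a + c * e) ^ Suc k = (a + c * e) * (a ^ k + of_nat k * a ^ (k - 1) * c * e + c^2 * r)"
      by (simp add: r)
    also have "\<dots> = a ^ Suc k + of_nat (Suc k) * a ^ k * c * e
        + c^2 * (of_nat k * a ^ j * e^2 + r * (a + c * e))"
      by (simp add: Suc power2_eq_square algebra_simps)
    finally show ?thesis
      by (simp add: dvdI)
  qed simp
qed simp

lemma cube_dvd_first_order:
  fixes a b c :: "'a::comm_ring_1"
  assumes "3 dvd c"
  shows "3 * c^2 dvd (a + c * b) ^ 3 - (a ^ 3 + 3 * a^2 * c * b)"
proof -
  obtain d where "c = 3 * d"
    using assms by blast
  then have "(a + c * b) ^ 3 - (a ^ 3 + 3 * a^2 * c * b) = 3 * c^2 * (a * b^2 + d * b^3)"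
    by (simp add: power2_eq_square power3_eq_cube algebra_simps)
  then show ?thesis
    by (simp add: dvdI)
qed

lemma pow3_dvd_cube_diff:
  fixes p q :: "'a::comm_ring_1"
  assumes "3 ^ t dvd p - q" "t \<ge> 1"
  shows "3 ^ (t + 1) dvd p ^ 3 - q ^ 3"
proof -
  have "3 dvd (3::'a) ^ t"
    using assms(2) by (simp add: dvd_power)
  then have "3 dvd p - q"
    using assms(1) by (rule dvd_trans)
  then have "3 dvd 3 * q^2 + (p - q) * (p + 2 * q)"
    by simp
  also have "3 * q^2 + (p - q) * (p + 2 * q) = p^2 + p * q + q^2"
    by (simp add: power2_eq_square algebra_simps)
  finally have "3 ^ t * 3 dvd (p - q) * (p^2 + p * q + q^2)"
    using assms(1) by (rule mult_dvd_mono[rotated])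
  also have "(p - q) * (p^2 + p * q + q^2) = p ^ 3 - q ^ 3"
    by (simp add: power2_eq_square power3_eq_cube algebra_simps)
  finally show ?thesis
    by (simp only: power_add power_one_right)
qed

lemma pow3_first_order_cube:
  fixes a e :: "'a::comm_ring_1"
  assumes "s \<ge> 1" "k = 3 ^ m * j"
  shows "3 ^ (Suc m + 2 * s) dvd (a ^ k + of_nat k * a ^ (k - 1) * 3 ^ s * e) ^ 3
           - (a ^ (3 * k) + of_nat (3 * k) * a ^ (3 * k - 1) * 3 ^ s * e)"
proof -
  have k: "of_nat k = 3 ^ m * (of_nat j :: 'a)"
    by (simp add: assms(2))
  have "3 * (3 ^ (m + s))^2 dvd (a ^ k + 3 ^ (m + s) * (of_nat j * a ^ (k - 1) * e)) ^ 3
      - ((a ^ k) ^ 3 + 3 * (a ^ k)^2 * 3 ^ (m + s) * (of_nat j * a ^ (k - 1) * e))"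
    by (rule cube_dvd_first_order) (use assms(1) in \<open>simp add: power_add\<close>)
  moreover have first: "a ^ k + 3 ^ (m + s) * (of_nat j * a ^ (k - 1) * e)
      = a ^ k + of_nat k * a ^ (k - 1) * 3 ^ s * e"
    by (simp add: k power_add algebra_simps)
  moreover have second: "(a ^ k) ^ 3 + 3 * (a ^ k)^2 * 3 ^ (m + s) * (of_nat j * a ^ (k - 1) * e)
      = a ^ (3 * k) + of_nat (3 * k) * a ^ (3 * k - 1) * 3 ^ s * e"
  proof (cases "j = 0")
    case False
    then have "k \<ge> 1"
      by (simp add: assms(2))
    then have "3 * k - 1 = k * 2 + (k - 1)"
      by simp
    then have "a ^ (3 * k - 1) = (a ^ k)^2 * a ^ (k - 1)"
      by (simp only: power_add power_mult)
    moreover have "a ^ (3 * k) = (a ^ k) ^ 3"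
      by (simp add: power_mult mult.commute)
    ultimately show ?thesis
      by (simp add: k power_add algebra_simps)
  qed (simp add: assms(2))
  moreover have "(3::'a) ^ (Suc m + 2 * s) dvd 3 * (3 ^ (m + s))^2"
  proof -
    have "(3::'a) ^ (Suc m + 2 * s) dvd 3 ^ Suc ((m + s) * 2)"
      by (rule le_imp_power_dvd) simp
    then show ?thesis
      by (simp only: power_Suc power_mult)
  qed
  ultimately show ?thesis
    by (simp only: first second) (rule dvd_trans)
qed

lemma pow3_binomial_lift:
  fixes a e :: "'a::comm_ring_1"
  assumes "s \<ge> 1" "k = 3 ^ m * j"
  shows "3 ^ (m + 2 * s) dvd (a + 3 ^ s * e) ^ k - (a ^ k + of_nat k * a ^ (k - 1) * 3 ^ s * e)"
  using assms(2)
proof (induction m arbitrary: k)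
  case 0
  then show ?case
    using binomial_dvd_first_order[of "3 ^ s" a e k] by (simp add: power_mult[symmetric] mult.commute)
next
  case (Suc m)
  define k' where "k' = 3 ^ m * j"
  define A where "A = a ^ k' + of_nat k' * a ^ (k' - 1) * 3 ^ s * e"
  have k: "k = 3 * k'"
    by (simp add: Suc.prems k'_def)
  have "3 ^ (m + 2 * s) dvd (a + 3 ^ s * e) ^ k' - A"
    using Suc.IH k'_def A_def by blast
  then have "3 ^ (m + 2 * s + 1) dvd ((a + 3 ^ s * e) ^ k') ^ 3 - A ^ 3"
    by (rule pow3_dvd_cube_diff) (use assms(1) in simp)
  then have "3 ^ (Suc m + 2 * s) dvd (a + 3 ^ s * e) ^ k - A ^ 3"
    by (simp add: k power_mult mult.commute)
  moreover have "3 ^ (Suc m + 2 * s) dvd A ^ 3 - (a ^ k + of_nat k * a ^ (k - 1) * 3 ^ s * e)"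
    unfolding A_def k using assms(1) k'_def by (rule pow3_first_order_cube)
  ultimately show ?case
    by (rule dvd_diff_chain)
qed

lemma trib_int_lift:
  assumes "trib_charpoly dvd [:0, 1:] ^ N - ([:a:] + 3 ^ s * d)" "s \<ge> 1" "k = 3 ^ m * j"
  shows "3 ^ (m + 2 * s) dvd trib_int (c + int (N * k))
           - (a ^ k * trib_int c + int k * a ^ (k - 1) * 3 ^ s * trib_eval c d)"
proof -
  define X where "X = [:0, 1::int:]"
  define P where "P = [:a:] + 3 ^ s * d"
  define Q where "Q = [:a:] ^ k + of_nat k * [:a:] ^ (k - 1) * 3 ^ s * d"
  have "X ^ N - P dvd (X ^ N) ^ k - P ^ k"
    by (metis power_diff_sumr2 dvd_triv_left)
  with assms(1) have "trib_charpoly dvd (X ^ N) ^ k - P ^ k"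
    unfolding X_def P_def by (rule dvd_trans)
  then have charpoly_part: "trib_eval c ((X ^ N) ^ k - P ^ k) = 0"
    by (rule trib_eval_charpoly_dvd)
  have "3 ^ (m + 2 * s) dvd P ^ k - Q"
    unfolding P_def Q_def using assms(2,3) by (rule pow3_binomial_lift)
  then have "[:3 ^ (m + 2 * s):] dvd P ^ k - Q"
    by (simp add: numeral_poly poly_const_pow)
  then have pow3_part: "3 ^ (m + 2 * s) dvd trib_eval c (P ^ k - Q)"
    by (rule trib_eval_const_dvd)
  have "trib_eval c Q = a ^ k * trib_int c + int k * a ^ (k - 1) * 3 ^ s * trib_eval c d"
    by (simp add: Q_def of_nat_poly numeral_poly poly_const_pow trib_eval_add trib_eval_smult
        trib_eval_pCons mult_ac)
  moreover have "trib_int (c + int (N * k)) = trib_eval c ((X ^ N) ^ k)"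
    by (simp add: X_def trib_eval_X_power power_mult[symmetric])
  ultimately show ?thesis
    using charpoly_part pow3_part by (simp add: trib_eval_diff)
qed

lemma charpoly_dvd_X_power_13: "trib_charpoly dvd [:0, 1:] ^ 13 - ([:4:] + 3 ^ 2 * [:30, 47, 56:])"
  using charpoly_dvd_X_power_sub[of 10] by (simp add: trib_int_values numeral_poly poly_const_pow)

lemma charpoly_dvd_X_power_39:
  "trib_charpoly dvd [:0, 1:] ^ 39 - ([:64:] + 3 ^ 3 * [:77143557, 119085665, 141889127:])"
  using charpoly_dvd_X_power_sub[of 36] by (simp add: trib_int_values numeral_poly poly_const_pow)

lemma trib_int_13_lift:
  assumes "k = 3 ^ m * j"
  shows "3 ^ (m + 4) dvd trib_int (c + 13 * int k)
           - (4 ^ k * trib_int c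
              + int k * 4 ^ (k - 1) * 9
                * (30 * trib_int c + 47 * trib_int (c + 1) + 56 * trib_int (c + 2)))"
  using trib_int_lift[OF charpoly_dvd_X_power_13 _ assms, of c] by (simp add: trib_eval_pCons add_ac)

lemma trib_int_39_lift:
  assumes "k = 3 ^ m * j"
  shows "3 ^ (m + 6) dvd trib_int (c + 39 * int k)
           - (64 ^ k * trib_int c
              + int k * 64 ^ (k - 1) * 27 * (77143557 * trib_int c + 119085665 * trib_int (c + 1)
                                              + 141889127 * trib_int (c + 2)))"
  using trib_int_lift[OF charpoly_dvd_X_power_39 _ assms, of c] by (simp add: trib_eval_pCons add_ac)

lemma multiplicity_eq_of_dvd_diff:
  fixes p x u :: int
  assumes "p ^ T dvd x - p ^ t * u" "\<not> p dvd u" "t < T" "p \<noteq> 0"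
  shows "multiplicity p x = t"
proof -
  have "p ^ Suc t dvd p ^ T"
    using assms(3) by (intro le_imp_power_dvd) simp
  then obtain w where "x - p ^ t * u = p ^ Suc t * w"
    using assms(1) by (meson dvd_def dvd_trans)
  then have "x = p ^ t * (u + p * w)"
    by (simp add: algebra_simps)
  moreover have "\<not> p dvd u + p * w"
    using assms(2) by (simp add: dvd_add_left_iff)
  ultimately show ?thesis
    using assms(4) by (rule multiplicity_decomposeI)
qed

lemma trib_int_13_cong_mod9: "9 dvd trib_int (c + 13 * int k) - 4 ^ k * trib_int c"
proof -
  define z where
    "z = int k * 4 ^ (k - 1) * (30 * trib_int c + 47 * trib_int (c + 1) + 56 * trib_int (c + 2))"
  have "3 ^ 4 dvd trib_int (c + 13 * int k) - (4 ^ k * trib_int c + 9 * z)"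
    using trib_int_13_lift[of k 0 k c] by (simp add: z_def mult_ac)
  then have "9 dvd trib_int (c + 13 * int k) - (4 ^ k * trib_int c + 9 * z)"
    by (rule dvd_trans[rotated]) simp
  then have "9 dvd (trib_int (c + 13 * int k) - (4 ^ k * trib_int c + 9 * z)) + 9 * z"
    by (rule dvd_add) simp
  then show ?thesis
    by simp
qed

lemma nat_pow3_decompose:
  assumes "(k::nat) > 0"
  obtains j where "k = 3 ^ multiplicity 3 k * j" "\<not> 3 dvd j"
  using multiplicity_decompose'[of k 3] assms by auto

lemma not_3_dvd_scaled:
  assumes "\<not> 3 dvd j" "\<not> 3 dvd b" "\<not> (3::int) dvd a"
  shows "\<not> 3 dvd int j * a ^ n * b"
proof -
  have "\<not> (3::int) dvd int j"
    using assms(1) by presburger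
  moreover have "\<not> 3 dvd a ^ n"
    using assms(3) prime_dvd_power[of 3 a n] by auto
  ultimately show ?thesis
    using assms(2) by (simp add: prime_dvd_mult_iff)
qed

lemma multiplicity_trib_int_13_at_zero:
  assumes "trib_int c = 0" "\<not> 3 dvd 47 * trib_int (c + 1) + 56 * trib_int (c + 2)" "k > 0"
  shows "multiplicity 3 (trib_int (c + 13 * int k)) = multiplicity 3 k + 2"
proof -
  define m where "m = multiplicity 3 k"
  obtain j where k: "k = 3 ^ m * j" and j: "\<not> 3 dvd j"
    using nat_pow3_decompose[OF assms(3)] unfolding m_def by blast
  define u where "u = int j * 4 ^ (k - 1) * (47 * trib_int (c + 1) + 56 * trib_int (c + 2))"
  have "3 ^ (m + 4) dvd trib_int (c + 13 * int k) - 3 ^ (m + 2) * u"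
    using trib_int_13_lift[OF k, of c] assms(1) by (simp add: u_def k power_add mult_ac)
  moreover have "\<not> 3 dvd u"
    unfolding u_def using j assms(2) by (rule not_3_dvd_scaled) simp
  ultimately show ?thesis
    unfolding m_def by (rule multiplicity_eq_of_dvd_diff) auto
qed

lemma multiplicity_trib_int_39_at_zero:
  assumes "trib_int c = 0" "119085665 * trib_int (c + 1) + 141889127 * trib_int (c + 2) = 9 * b"
    "\<not> 3 dvd b" "k > 0"
  shows "multiplicity 3 (trib_int (c + 39 * int k)) = multiplicity 3 k + 5"
proof -
  define m where "m = multiplicity 3 k"
  obtain j where k: "k = 3 ^ m * j" and j: "\<not> 3 dvd j"
    using nat_pow3_decompose[OF assms(4)] unfolding m_def by blast
  define u where "u = int j * 64 ^ (k - 1) * b"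
  have "3 ^ (m + 6) dvd trib_int (c + 39 * int k) - 3 ^ (m + 5) * u"
    using trib_int_39_lift[OF k, of c] assms(1,2) by (simp add: u_def k power_add mult_ac)
  moreover have "\<not> 3 dvd u"
    unfolding u_def using j assms(3) by (rule not_3_dvd_scaled) simp
  ultimately show ?thesis
    unfolding m_def by (rule multiplicity_eq_of_dvd_diff) auto
qed

lemma multiplicity_trib_int_13_periodic:
  assumes "trib_int c = 3 ^ t * v" "\<not> 3 dvd v" "t < 2"
  shows "multiplicity 3 (trib_int (c + 13 * int k)) = t"
proof -
  have "3 ^ 2 dvd trib_int (c + 13 * int k) - 3 ^ t * (4 ^ k * v)"
    using trib_int_13_cong_mod9[of c k] assms(1) by (simp add: mult_ac)
  moreover have "\<not> 3 dvd 4 ^ k * v"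
    using assms(2) prime_dvd_power[of 3 "4::int" k] by (auto simp: prime_dvd_mult_iff)
  ultimately show ?thesis
    by (rule multiplicity_eq_of_dvd_diff) (use assms(3) in auto)
qed

lemma multiplicity_3_13_mult: "k > 0 \<Longrightarrow> multiplicity (3::nat) (13 * k) = multiplicity 3 k"
  by (simp add: prime_elem_multiplicity_mult_distrib not_dvd_imp_multiplicity_0)

lemma multiplicity_3_39_mult:
  "k > 0 \<Longrightarrow> multiplicity (3::nat) (39 * k) = multiplicity 3 k + 1"
  using multiplicity_times_same[of "13 * k" "3::nat"] multiplicity_3_13_mult[of k] by simp

lemma multiplicity_trib_mod13_unit:
  assumes "n mod 13 \<in> {1, 2, 3, 4, 5, 6, 8, 10, 11}"
  shows "multiplicity 3 (trib n) = 0"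
proof -
  define r where "r = n mod 13"
  have "int n = int r + 13 * int (n div 13)"
    using mod_mult_div_eq[of n 13] unfolding r_def by linarith
  then have "trib n = trib_int (int r + 13 * int (n div 13))"
    by (metis trib_int_of_nat)
  moreover have "\<not> 3 dvd trib_int (int r)"
    using assms unfolding r_def[symmetric] by (auto simp: trib_int_values)
  ultimately show ?thesis
    using multiplicity_trib_int_13_periodic[of "int r" 0] by simp
qed

lemma multiplicity_trib_mod13_7:
  assumes "n mod 13 = 7"
  shows "multiplicity 3 (trib n) = 1"
proof -
  have "int n = 7 + 13 * int (n div 13)"
    using assms mod_mult_div_eq[of n 13] by linarith
  then have "trib n = trib_int (7 + 13 * int (n div 13))"
    by (metis trib_int_of_nat)
  then show ?thesis
    using multiplicity_trib_int_13_periodic[of 7 1 8] by (simp add: trib_int_values)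
qed

lemma multiplicity_trib_mod13_0:
  assumes "n mod 13 = 0" "n \<ge> 1"
  shows "multiplicity 3 (trib n) = multiplicity 3 n + 2"
proof -
  define k where "k = n div 13"
  have n: "n = 13 * k" and "k > 0"
    using assms by (auto simp: k_def)
  then have "trib n = trib_int (0 + 13 * int k)"
    by (simp add: trib_int_of_nat[symmetric])
  then show ?thesis
    using multiplicity_trib_int_13_at_zero[of 0 k] \<open>k > 0\<close>
    by (simp add: trib_int_values n multiplicity_3_13_mult)
qed

lemma multiplicity_trib_mod13_12:
  assumes "n mod 13 = 12"
  shows "multiplicity 3 (trib n) = multiplicity 3 (n + 1) + 2"
proof -
  define k where "k = n div 13 + 1"
  have n: "n + 1 = 13 * k" and "k > 0"
    using assms mod_mult_div_eq[of n 13] by (auto simp: k_def)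
  then have "int n = -1 + 13 * int k"
    by linarith
  then have "trib n = trib_int (-1 + 13 * int k)"
    by (metis trib_int_of_nat)
  then show ?thesis
    using multiplicity_trib_int_13_at_zero[of "-1" k] multiplicity_3_13_mult[of k, folded n]
      \<open>k > 0\<close>
    by (simp add: trib_int_values)
qed

lemma multiplicity_trib_mod39_9:
  assumes "n mod 39 = 9"
  shows "multiplicity 3 (trib n) = 4"
proof -
  define k where "k = n div 39"
  have "int n = 9 + 39 * int k"
    using assms mod_mult_div_eq[of n 39] unfolding k_def by linarith
  then have "trib n = trib_int (9 + 39 * int k)"
    by (metis trib_int_of_nat)
  moreover have
    "3 ^ 6 dvd trib_int (9 + 39 * int k) - 3 ^ 4 * (64 ^ k + 20956671000 * int k * 64 ^ (k - 1))"
    \<comment> \<open>3 * 20956671000 = 77143557 * T 9 + 119085665 * T 10 + 141889127 * T 11\<close>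
    using trib_int_39_lift[of k 0 k 9] by (simp add: trib_int_values algebra_simps)
  then have "multiplicity 3 (trib_int (9 + 39 * int k)) = 4"
  proof (rule multiplicity_eq_of_dvd_diff)
    show "\<not> 3 dvd 64 ^ k + 20956671000 * int k * 64 ^ (k - 1)"
      using prime_dvd_power[of 3 "64::int" k] by (auto simp: dvd_add_left_iff)
  qed simp_all
  ultimately show ?thesis
    by simp
qed

lemma multiplicity_trib_mod39_22:
  assumes "n mod 39 = 22"
  shows "multiplicity 3 (trib n) = multiplicity 3 (n + 17) + 4"
proof -
  define k where "k = n div 39 + 1"
  have n: "n + 17 = 39 * k" and "k > 0"
    using assms mod_mult_div_eq[of n 39] by (auto simp: k_def)
  then have "int n = -17 + 39 * int k"
    by linarith
  then have "trib n = trib_int (-17 + 39 * int k)"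
    by (metis trib_int_of_nat)
  then show ?thesis
    using multiplicity_trib_int_39_at_zero[of "-17" 919 k] \<open>k > 0\<close>
    by (simp add: trib_int_values n multiplicity_3_39_mult)
qed

lemma multiplicity_trib_mod39_35:
  assumes "n mod 39 = 35"
  shows "multiplicity 3 (trib n) = multiplicity 3 (n + 4) + 4"
proof -
  define k where "k = n div 39 + 1"
  have n: "n + 4 = 39 * k" and "k > 0"
    using assms mod_mult_div_eq[of n 39] by (auto simp: k_def)
  then have "int n = -4 + 39 * int k"
    by linarith
  then have "trib n = trib_int (-4 + 39 * int k)"
    by (metis trib_int_of_nat)
  then show ?thesis
    using multiplicity_trib_int_39_at_zero[of "-4" 2533718 k] \<open>k > 0\<close>
    by (simp add: trib_int_values n multiplicity_3_39_mult)
qed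

theorem theorem3:
  fixes n :: nat
  assumes "n \<ge> 1"
  shows "(n mod 13 \<in> {1,2,3,4,5,6,8,10,11} \<longrightarrow> multiplicity (3::int) (trib n) = 0)
       \<and> (n mod 13 = 7 \<longrightarrow> multiplicity (3::int) (trib n) = 1)
       \<and> (n mod 13 = 0 \<longrightarrow> multiplicity (3::int) (trib n) = multiplicity (3::nat) n + 2)
       \<and> (n mod 13 = 12 \<longrightarrow> multiplicity (3::int) (trib n) = multiplicity (3::nat) (n + 1) + 2)
       \<and> (n mod 39 = 9 \<longrightarrow> multiplicity (3::int) (trib n) = 4)
       \<and> (n mod 39 = 22 \<longrightarrow> multiplicity (3::int) (trib n) = multiplicity (3::nat) (n + 17) + 4)
       \<and> (n mod 39 = 35 \<longrightarrow> multiplicity (3::int) (trib n) = multiplicity (3::nat) (n + 4) + 4)"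
  using multiplicity_trib_mod13_unit multiplicity_trib_mod13_7 multiplicity_trib_mod13_0[OF _ assms]
    multiplicity_trib_mod13_12 multiplicity_trib_mod39_9 multiplicity_trib_mod39_22
    multiplicity_trib_mod39_35
  by blast

end
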